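(* (Repeated insertion model.) For each $1\le x\le n$ let $\theta(\cdot,x)$ be a probability vector on $\{1,\ldots,x\}$, and define the distribution $p$ on $S_n$ by \[ p(\pi)=\prod_{x=1}^n\theta(r_x(\pi),x),\qquad r_x(\pi)=\bigl|\{j\le x:\ \pi^{-1}(j)\le\pi^{-1}(x)\}\bigr| \] (the position of $x$ in the relative order of $1,\ldots,x$ in the sequence $(\pi(1),\ldots,\pi(n))$). Then $p$ is bi-decomposable; in particular $p(\pi)=\prod_{k=0}^{n-1}\Lambda(\pi(k+1),\pi\{1:k\})$ with $\Lambda(x,C)=\theta(|C\cap\{1,\ldots,x\}|+1,x)$.
   Context: $S_n$ is the group of permutations of $\{1,\ldots,n\}$; $\pi\{1:k\}=\{\pi(1),\ldots,\pi(k)\}$. A distribution $p$ on $S_n$ is $L$-decomposable if there exist a nonnegative function $\Lambda$ on pairs $(x,C)$ with $C\subset\{1,\ldots,n\}$, $x\notin C$, and a constant $c$ with $p(\pi)=c\prod_{k=0}^{n-1}\Lambda(\pi(k+1),\pi\{1:k\})$ for all $\pi$. $p$ is bi-decomposable if both $p$ and $\pi\mapsto p(\pi^{-1})$ are $L$-decomposable. *)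

theory Defs
  imports Complex_Main "HOL-Combinatorics.Permutations"
begin

text \<open>S_n is modelled as the set of functions pi :: nat => nat with pi permutes {1..n}.
  pi{1:k} = pi ` {1..k}.\<close>

definition L_decomposable :: "nat \<Rightarrow> ((nat \<Rightarrow> nat) \<Rightarrow> real) \<Rightarrow> bool" where
  "L_decomposable n p \<longleftrightarrow>
     (\<exists>(\<Lambda> :: nat \<Rightarrow> nat set \<Rightarrow> real) (c :: real).
        (\<forall>x C. C \<subseteq> {1..n} \<and> x \<in> {1..n} \<and> x \<notin> C \<longrightarrow> \<Lambda> x C \<ge> 0) \<and>
        (\<forall>\<pi>. \<pi> permutes {1..n} \<longrightarrow>
              p \<pi> = c * (\<Prod>k<n. \<Lambda> (\<pi> (k+1)) (\<pi> ` {1..k}))))"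

definition bi_decomposable :: "nat \<Rightarrow> ((nat \<Rightarrow> nat) \<Rightarrow> real) \<Rightarrow> bool" where
  "bi_decomposable n p \<longleftrightarrow> L_decomposable n p \<and> L_decomposable n (\<lambda>\<pi>. p (inv \<pi>))"

definition rim_rank :: "(nat \<Rightarrow> nat) \<Rightarrow> nat \<Rightarrow> nat" where
  "rim_rank \<pi> x = card {j \<in> {1..x}. inv \<pi> j \<le> inv \<pi> x}"

end

theory Submission
  imports Defs
begin

(* Write x = pi(k+1) for the element inserted at position k+1.
   The whole proof rests on a duality of ranks: for pi permuting {1..n} and a position i,
     rim_rank pi (pi i) = rim_rank (inv pi) i,
   i.e. the rank of the value pi i among smaller values (ordered by position) equals the
   rank of position i among earlier positions (ordered by value).  The right-hand side is
   the relative rank of pi(k+1) among pi(1),...,pi(k+1), namely |pi{1:k} \<inter> {1..x}| + 1.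
   Reindexing the product defining p along positions therefore gives
     p pi       = prod_k theta(|pi{1:k} \<inter> {1..pi(k+1)}| + 1, pi(k+1)),
     p (inv pi) = prod_k theta(|pi{1:k} \<inter> {1..pi(k+1)}| + 1, |pi{1:k}| + 1),
   two L-decompositions with constant 1, whose factors are nonnegative because the rank
   arguments stay in the range where theta is nonnegative. *)

lemma L_decomposableI:
  fixes \<Lambda> :: "nat \<Rightarrow> nat set \<Rightarrow> real"
  assumes "\<And>x C. C \<subseteq> {1..n} \<Longrightarrow> x \<in> {1..n} \<Longrightarrow> x \<notin> C \<Longrightarrow> \<Lambda> x C \<ge> 0"
    and "\<And>\<pi>. \<pi> permutes {1..n} \<Longrightarrow> p \<pi> = (\<Prod>k<n. \<Lambda> (\<pi> (k+1)) (\<pi> ` {1..k}))"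
  shows "L_decomposable n p"
  unfolding L_decomposable_def
  by (rule exI[of _ \<Lambda>], rule exI[of _ 1]) (use assms in auto)

lemma prod_over_positions:
  fixes f :: "nat \<Rightarrow> 'a :: comm_monoid_mult"
  assumes "\<pi> permutes {1..n}"
  shows "(\<Prod>x=1..n. f x) = (\<Prod>k<n. f (\<pi> (k+1)))"
proof -
  have "(\<Prod>x=1..n. f x) = (\<Prod>i=1..n. f (\<pi> i))"
    using prod.permute[OF assms, of f] by simp
  also have "\<dots> = (\<Prod>k<n. f (\<pi> (k+1)))"
    using prod.atLeast1_atMost_eq[of "\<lambda>i. f (\<pi> i)" n] by simp
  finally show ?thesis .
qed

lemma rim_rank_duality:
  assumes p: "\<pi> permutes {1..n}" and i: "i \<in> {1..n}"
  shows "rim_rank \<pi> (\<pi> i) = rim_rank (inv \<pi>) i"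
proof -
  have inj: "inj \<pi>" using permutes_inj[OF p] .
  have inv_inv: "inv (inv \<pi>) = \<pi>" using inv_inv_eq[OF permutes_bij[OF p]] .
  have inv_at: "inv \<pi> (\<pi> j) = j" for j using permutes_inverses(2)[OF p] .
  have "\<pi> ` {j \<in> {1..i}. \<pi> j \<le> \<pi> i} = {v \<in> {1..\<pi> i}. inv \<pi> v \<le> i}"
  proof (rule set_eqI, rule iffI)
    fix v assume "v \<in> \<pi> ` {j \<in> {1..i}. \<pi> j \<le> \<pi> i}"
    then obtain j where j: "j \<in> {1..i}" "\<pi> j \<le> \<pi> i" "v = \<pi> j" by auto
    have "\<pi> j \<in> {1..n}" using permutes_in_image[OF p] j i by auto
    then show "v \<in> {v \<in> {1..\<pi> i}. inv \<pi> v \<le> i}" using j inv_at by auto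
  next
    fix v assume v: "v \<in> {v \<in> {1..\<pi> i}. inv \<pi> v \<le> i}"
    have "\<pi> i \<in> {1..n}" using permutes_in_image[OF p] i by auto
    then have "inv \<pi> v \<in> {1..n}"
      using v permutes_in_image[OF permutes_inv[OF p]] by auto
    moreover have "\<pi> (inv \<pi> v) = v" using permutes_inverses(1)[OF p] .
    ultimately show "v \<in> \<pi> ` {j \<in> {1..i}. \<pi> j \<le> \<pi> i}" using v by force
  qed
  then have "card {v \<in> {1..\<pi> i}. inv \<pi> v \<le> i} = card {j \<in> {1..i}. \<pi> j \<le> \<pi> i}"
    using card_image[OF inj_on_subset[OF inj]] by (metis subset_UNIV)
  then show ?thesis unfolding rim_rank_def inv_inv inv_at by simp
qed

lemma rim_rank_inv_prefix:
  assumes p: "\<pi> permutes {1..n}" and k: "k < n"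
  shows "rim_rank (inv \<pi>) (k+1) = card (\<pi> ` {1..k} \<inter> {1..\<pi> (k+1)}) + 1"
proof -
  have inj: "inj \<pi>" using permutes_inj[OF p] .
  have split: "{j \<in> {1..k+1}. \<pi> j \<le> \<pi> (k+1)} = insert (k+1) {j \<in> {1..k}. \<pi> j \<le> \<pi> (k+1)}"
    by auto
  have "\<pi> j \<ge> 1" if "j \<in> {1..k}" for j
    using permutes_in_image[OF p, of j] that k by auto
  then have "\<pi> ` {j \<in> {1..k}. \<pi> j \<le> \<pi> (k+1)} = \<pi> ` {1..k} \<inter> {1..\<pi> (k+1)}"
    by auto
  then have "card {j \<in> {1..k}. \<pi> j \<le> \<pi> (k+1)} = card (\<pi> ` {1..k} \<inter> {1..\<pi> (k+1)})"
    using card_image[OF inj_on_subset[OF inj]] by (metis subset_UNIV)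
  then show ?thesis
    unfolding rim_rank_def inv_inv_eq[OF permutes_bij[OF p]] split by simp
qed

lemma insertion_rank_bound:
  assumes "x \<notin> C" "1 \<le> x"
  shows "card (C \<inter> {1..x}) + 1 \<le> x"
proof -
  have "C \<inter> {1..x} \<subseteq> {1..<x}" using assms(1) by (auto simp: le_less)
  then have "card (C \<inter> {1..x}) \<le> card {1..<x}" by (intro card_mono) auto
  then show ?thesis using assms(2) by simp
qed

lemma placed_set_bound:
  assumes "C \<subseteq> {1..n}" "x \<in> {1..n}" "x \<notin> C"
  shows "card C + 1 \<le> n"
proof -
  have "card C \<le> card ({1..n} - {x})" using assms by (intro card_mono) auto
  then show ?thesis using assms(2) by auto
qed

theorem mainTheorem14:
  fixes n :: nat and \<theta> :: "nat \<Rightarrow> nat \<Rightarrow> real" and p :: "(nat \<Rightarrow> nat) \<Rightarrow> real"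
  assumes theta_nonneg: "\<And>x r. 1 \<le> x \<Longrightarrow> x \<le> n \<Longrightarrow> 1 \<le> r \<Longrightarrow> r \<le> x \<Longrightarrow> \<theta> r x \<ge> 0"
    and theta_sum: "\<And>x. 1 \<le> x \<Longrightarrow> x \<le> n \<Longrightarrow> (\<Sum>r=1..x. \<theta> r x) = 1"
    and p_def: "p = (\<lambda>\<pi>. \<Prod>x=1..n. \<theta> (rim_rank \<pi> x) x)"
  shows "bi_decomposable n p \<and>
         (\<forall>\<pi>. \<pi> permutes {1..n} \<longrightarrow>
            p \<pi> = (\<Prod>k<n. (\<lambda>x C. \<theta> (card (C \<inter> {1..x}) + 1) x) (\<pi> (k+1)) (\<pi> ` {1..k})))"
proof -
  let ?rank = "\<lambda>\<pi> k. card (\<pi> ` {1..k} \<inter> {1..\<pi> (k+1)}) + 1"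
  have rank: "rim_rank \<pi> (\<pi> (k+1)) = ?rank \<pi> k" "rim_rank (inv \<pi>) (k+1) = ?rank \<pi> k"
    if "\<pi> permutes {1..n}" "k < n" for \<pi> k
    using rim_rank_duality[OF that(1), of "k+1"] rim_rank_inv_prefix[OF that] that(2) by auto
  have forward: "p \<pi> = (\<Prod>k<n. \<theta> (?rank \<pi> k) (\<pi> (k+1)))" if "\<pi> permutes {1..n}" for \<pi>
    unfolding p_def prod_over_positions[OF that] using rank(1)[OF that] by simp
  \<comment> \<open>for inv pi the product over {1..n} is already indexed by positions of pi\<close>
  have inverse: "p (inv \<pi>) = (\<Prod>k<n. \<theta> (?rank \<pi> k) (card (\<pi> ` {1..k}) + 1))"
    if "\<pi> permutes {1..n}" for \<pi>
    unfolding p_def prod_over_positions[OF permutes_id] using rank(2)[OF that]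
      card_image[OF inj_on_subset[OF permutes_inj[OF that]]] by simp
  have "L_decomposable n p"
  proof (rule L_decomposableI)
    fix x C assume C: "C \<subseteq> {1..n}" "x \<in> {1..n}" "x \<notin> C"
    then show "\<theta> (card (C \<inter> {1..x}) + 1) x \<ge> 0"
      using insertion_rank_bound[OF C(3)] by (intro theta_nonneg) auto
  qed (rule forward)
  moreover have "L_decomposable n (\<lambda>\<pi>. p (inv \<pi>))"
  proof (rule L_decomposableI)
    fix x C assume C: "C \<subseteq> {1..n}" "x \<in> {1..n}" "x \<notin> C"
    have "card (C \<inter> {1..x}) \<le> card C"
      using C(1) by (intro card_mono) (auto intro: finite_subset)
    then show "\<theta> (card (C \<inter> {1..x}) + 1) (card C + 1) \<ge> 0"
      using placed_set_bound[OF C] by (intro theta_nonneg) auto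
  qed (rule inverse)
  ultimately show ?thesis using forward unfolding bi_decomposable_def by simp
qed

end
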